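(* Let $G\subset\mathrm{Isom}(\mathbf H^n)$ be a non-elementary finitely generated torsion-free Kleinian group and $H$ a subgroup of $G$ with $\mathrm{Ax}(G)=\mathrm{Ax}(H)$. Then for every hyperbolic element $g\in G$ there is an integer $n>0$ with $g^n\in H$.
   Context: A Kleinian group is a discrete subgroup of $\mathrm{Isom}(\mathbf{H}^n)$; non-elementary means its limit set has at least three points. A hyperbolic element is an isometry with exactly two fixed points, both at infinity; its axis is the geodesic joining them. $\mathrm{Ax}(G)$ is the set of axes of hyperbolic elements of $G$. *)

theory Defs
  imports "HOL-Analysis.Analysis"
begin

text \<open>Hyperboloid model of hyperbolic n-space inside R^(n,1) = real^'n \<times> real
  (the last coordinate is the time coordinate).\<close>

type_synonym 'n lvec = "(real^'n) \<times> real"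
type_synonym 'n lmap = "'n lvec \<Rightarrow> 'n lvec"

definition lform :: "'n::finite lvec \<Rightarrow> 'n lvec \<Rightarrow> real" where
  "lform x y = fst x \<bullet> fst y - snd x * snd y"

definition hyp_space :: "('n::finite) lvec set" where
  "hyp_space = {x. lform x x = -1 \<and> snd x > 0}"

text \<open>Ideal boundary: future null rays, parametrised by the unit sphere
  (the ray through (xi,1)).\<close>
definition bdry :: "(real^'n::finite) set" where
  "bdry = sphere 0 1"

text \<open>Isom(H^n) = O^+(n,1): linear bijections preserving the Lorentz form
  and the upper sheet of the hyperboloid.\<close>
definition isom :: "('n::finite) lmap set" where
  "isom = {f. linear f \<and> bij f \<and> (\<forall>x y. lform (f x) (f y) = lform x y)
              \<and> f ` hyp_space = hyp_space}"

definition fixes_bdry :: "('n::finite) lmap \<Rightarrow> real^'n \<Rightarrow> bool" where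
  "fixes_bdry f \<xi> \<longleftrightarrow> \<xi> \<in> bdry \<and> (\<exists>c. f (\<xi>, 1) = c *\<^sub>R (\<xi>, 1))"

definition hyperbolic :: "('n::finite) lmap \<Rightarrow> bool" where
  "hyperbolic f \<longleftrightarrow> f \<in> isom \<and> (\<forall>x\<in>hyp_space. f x \<noteq> x)
     \<and> (\<exists>\<xi> \<eta>. \<xi> \<noteq> \<eta> \<and> {\<zeta>. fixes_bdry f \<zeta>} = {\<xi>, \<eta>})"

definition geodesic :: "real^'n::finite \<Rightarrow> real^'n \<Rightarrow> 'n lvec set" where
  "geodesic \<xi> \<eta> = {x \<in> hyp_space. \<exists>a b. x = a *\<^sub>R (\<xi>, 1) + b *\<^sub>R (\<eta>, 1)}"

definition Ax :: "('n::finite) lmap set \<Rightarrow> 'n lvec set set" where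
  "Ax G = {geodesic \<xi> \<eta> | \<xi> \<eta>. \<exists>g\<in>G. hyperbolic g \<and> {\<zeta>. fixes_bdry g \<zeta>} = {\<xi>, \<eta>}}"

text \<open>Klein-model coordinates of a point of the hyperboloid (open unit ball).\<close>
definition klein :: "'n::finite lvec \<Rightarrow> real^'n" where
  "klein x = (1 / snd x) *\<^sub>R fst x"

definition base_point :: "'n::finite lvec" where
  "base_point = (0, 1)"

definition limit_set :: "('n::finite) lmap set \<Rightarrow> (real^'n) set" where
  "limit_set G = {\<xi> \<in> bdry. \<exists>s. (\<forall>k. s k \<in> G) \<and>
                     (\<lambda>k. klein (s k base_point)) \<longlonglongrightarrow> \<xi>}"

definition isom_subgroup :: "('n::finite) lmap set \<Rightarrow> bool" where
  "isom_subgroup G \<longleftrightarrow> G \<subseteq> isom \<and> id \<in> G \<and> (\<forall>f\<in>G. \<forall>g\<in>G. f \<circ> g \<in> G)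
     \<and> (\<forall>f\<in>G. inv f \<in> G)"

definition discrete_group :: "('n::finite) lmap set \<Rightarrow> bool" where
  "discrete_group G \<longleftrightarrow> (\<forall>g\<in>G. \<exists>\<epsilon>>0. \<forall>h\<in>G. onorm (\<lambda>v. h v - g v) < \<epsilon> \<longrightarrow> h = g)"

definition kleinian :: "('n::finite) lmap set \<Rightarrow> bool" where
  "kleinian G \<longleftrightarrow> isom_subgroup G \<and> discrete_group G"

definition fin_generated :: "('n::finite) lmap set \<Rightarrow> bool" where
  "fin_generated G \<longleftrightarrow> (\<exists>S. finite S \<and> S \<subseteq> G \<and>
      G = \<Inter>{K. isom_subgroup K \<and> S \<subseteq> K})"

definition torsion_free :: "('n::finite) lmap set \<Rightarrow> bool" where
  "torsion_free G \<longleftrightarrow> (\<forall>g\<in>G. \<forall>m::nat. m > 0 \<and> g ^^ m = id \<longrightarrow> g = id)"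

definition non_elementary :: "('n::finite) lmap set \<Rightarrow> bool" where
  "non_elementary G \<longleftrightarrow> (\<exists>a b c. a \<in> limit_set G \<and> b \<in> limit_set G \<and> c \<in> limit_set G
      \<and> a \<noteq> b \<and> a \<noteq> c \<and> b \<noteq> c)"

end

theory Submission
  imports Defs
begin

text \<open>
  Let \<open>g \<in> G\<close> be hyperbolic with endpoints \<open>\<xi>, \<eta>\<close> on the sphere at infinity,
  and write \<open>u = (\<xi>,1)\<close>, \<open>v = (\<eta>,1)\<close> for the corresponding null vectors.  Every isometry
  fixing \<open>\<xi>\<close> and \<open>\<eta>\<close> scales \<open>u\<close> by some \<open>\<beta> > 0\<close> and \<open>v\<close> by \<open>1/\<beta>\<close> (it translates along
  the axis by \<open>\<bar>ln \<beta>\<bar>\<close>).  Since \<open>Ax G = Ax H\<close> and a geodesic determines its endpoints,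
  some hyperbolic \<open>h \<in> H\<close> has the same endpoints; replacing \<open>h\<close> by its inverse if
  necessary, \<open>g\<close> and \<open>h\<close> translate in opposite directions.  Hence for every \<open>a\<close> there is
  an exponent \<open>k a\<close> such that \<open>F a = g^a \<circ> h^(k a)\<close> translates by at most \<open>\<bar>ln d\<bar>\<close>.
  An isometry with a bounded translation along a fixed axis has bounded operator norm,
  so the \<open>F a\<close> form a bounded family in the discrete group \<open>G\<close>; by compactness two of
  them coincide, \<open>F a = F b\<close> with \<open>a < b\<close>, and then \<open>g^(b-a) = h^(k a) \<circ> h^(-k b) \<in> H\<close>.
\<close>

subsection \<open>The Lorentz form\<close>

lemma lform_sym: "lform x y = lform y x"
  by (simp add: lform_def inner_commute mult.commute)

lemma lform_add_left: "lform (x + y) z = lform x z + lform y z"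
  by (simp add: lform_def inner_add_left algebra_simps)

lemma lform_scale_left: "lform (a *\<^sub>R x) z = a * lform x z"
  by (simp add: lform_def algebra_simps)

lemma lform_add_right: "lform z (x + y) = lform z x + lform z y"
  by (simp add: lform_def inner_add_right algebra_simps)

lemma lform_scale_right: "lform z (a *\<^sub>R x) = a * lform z x"
  by (simp add: lform_def algebra_simps)

lemma lform_diff_left: "lform (x - y) z = lform x z - lform y z"
  by (simp add: lform_def inner_diff_left algebra_simps)

lemma lform_comb:
  "lform (a *\<^sub>R x + b *\<^sub>R y) (c *\<^sub>R x + d *\<^sub>R y)
   = a*c*lform x x + (a*d + b*c) * lform x y + b*d*lform y y"
  by (simp add: lform_add_left lform_add_right lform_scale_left lform_scale_right
      lform_sym[of y x] algebra_simps)

text \<open>The Lorentz form is the Euclidean inner product with the time coordinate reflected;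
  this gives Cauchy--Schwarz type estimates.\<close>
lemma lform_inner: "lform x y = inner x (fst y, - snd y)"
  by (cases x, cases y) (simp add: lform_def)

lemma lform_abs_le: "\<bar>lform x y\<bar> \<le> norm x * norm y"
proof -
  have "norm (fst y, - snd y) = norm y" by (cases y) (simp add: norm_Pair)
  then show ?thesis
    unfolding lform_inner using Cauchy_Schwarz_ineq2[of x "(fst y, - snd y)"] by simp
qed

lemma lform_self_le: "lform w w \<le> norm w ^ 2"
  by (cases w) (simp add: lform_def norm_Pair dot_square_norm power2_eq_square)

subsection \<open>Boundary points and the geodesics joining them\<close>

lemma bdry_norm: "\<xi> \<in> bdry \<Longrightarrow> norm \<xi> = 1"
  by (simp add: bdry_def)

lemma bdry_inner_self: "\<xi> \<in> bdry \<Longrightarrow> \<xi> \<bullet> \<xi> = 1"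
  by (simp add: power2_norm_eq_inner[symmetric] bdry_norm)

lemma lform_null: "\<xi> \<in> bdry \<Longrightarrow> lform (\<xi>,1) (\<xi>,1) = 0"
  by (simp add: lform_def bdry_inner_self)

lemma norm_null_vector: "\<xi> \<in> bdry \<Longrightarrow> norm (\<xi>, 1::real) = sqrt 2"
  by (simp add: norm_Pair bdry_norm)

lemma lform_null_pair_neg:
  assumes "\<xi> \<in> bdry" "\<eta> \<in> bdry" "\<xi> \<noteq> \<eta>"
  shows "lform (\<xi>,1) (\<eta>,1) < 0"
proof -
  have "0 < (\<xi> - \<eta>) \<bullet> (\<xi> - \<eta>)" using assms(3) by simp
  also have "\<dots> = \<xi> \<bullet> \<xi> + \<eta> \<bullet> \<eta> - 2 * (\<xi> \<bullet> \<eta>)"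
    by (simp add: inner_diff_left inner_diff_right inner_commute)
  finally show ?thesis using assms(1,2) by (simp add: lform_def bdry_inner_self)
qed

lemma null_comb_in_hyp_space:
  assumes "\<xi> \<in> bdry" "\<eta> \<in> bdry" "2 * a * b * lform (\<xi>,1) (\<eta>,1) = -1" "a + b > 0"
  shows "a *\<^sub>R (\<xi>,1) + b *\<^sub>R (\<eta>,1) \<in> hyp_space"
proof -
  have "lform (a *\<^sub>R (\<xi>,1) + b *\<^sub>R (\<eta>,1)) (a *\<^sub>R (\<xi>,1) + b *\<^sub>R (\<eta>,1))
     = 2 * a * b * lform (\<xi>,1) (\<eta>,1)"
    unfolding lform_comb using lform_null[OF assms(1)] lform_null[OF assms(2)]
    by (simp add: algebra_simps)
  then show ?thesis using assms by (simp add: hyp_space_def)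
qed

lemma geodesic_point_exists:
  assumes "\<xi> \<in> bdry" "\<eta> \<in> bdry" "\<xi> \<noteq> \<eta>" "s > 0"
  shows "\<exists>t>0. (s * t) *\<^sub>R (\<xi>,1) + t *\<^sub>R (\<eta>,1) \<in> geodesic \<xi> \<eta>"
proof -
  define L where "L = lform (\<xi>,1) (\<eta>,1)"
  have L: "L < 0" using lform_null_pair_neg[OF assms(1-3)] by (simp add: L_def)
  have pos: "- 2 * s * L > 0" using L assms(4) by (simp add: mult_pos_neg)
  define t where "t = 1 / sqrt (- 2 * s * L)"
  have "t * t = 1 / (- 2 * s * L)"
    using pos by (simp add: t_def)
  then have t: "t > 0" "2 * (s * t) * t * L = -1"
    using pos by (auto simp: t_def field_simps)
  have "(s * t) *\<^sub>R (\<xi>,1) + t *\<^sub>R (\<eta>,1) \<in> hyp_space"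
    using t assms(4) by (intro null_comb_in_hyp_space[OF assms(1,2)]) (auto simp: L_def intro!: add_pos_pos)
  then show ?thesis using t(1) unfolding geodesic_def by blast
qed

text \<open>The span of a geodesic is the plane spanned by its two null vectors; the only null
  directions in it are the endpoints.  Hence a geodesic determines its endpoints.\<close>
lemma null_vector_in_geodesic_span:
  assumes "\<xi> \<in> bdry" "\<eta> \<in> bdry" "\<xi> \<noteq> \<eta>" "\<zeta> \<in> bdry"
  shows "(\<zeta>,1) \<in> span (geodesic \<xi> \<eta>) \<longleftrightarrow> \<zeta> = \<xi> \<or> \<zeta> = \<eta>"
proof
  have "geodesic \<xi> \<eta> \<subseteq> span {(\<xi>,1), (\<eta>,1)}"
  proof
    fix x assume "x \<in> geodesic \<xi> \<eta>"
    then obtain a b where "x = a *\<^sub>R (\<xi>,1) + b *\<^sub>R (\<eta>,1)" by (auto simp: geodesic_def)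
    then show "x \<in> span {(\<xi>,1), (\<eta>,1)}" by (metis span_add span_mul span_base insertI1 insertI2)
  qed
  then have sub: "span (geodesic \<xi> \<eta>) \<subseteq> span {(\<xi>,1), (\<eta>,1)}"
    by (simp add: span_minimal)
  assume "(\<zeta>,1) \<in> span (geodesic \<xi> \<eta>)"
  then have "(\<zeta>,1) \<in> span {(\<xi>,1), (\<eta>,1::real)}" using sub by blast
  then obtain a where "(\<zeta>,1) - a *\<^sub>R (\<xi>,1) \<in> span {(\<eta>,1::real)}"
    by (auto simp: span_breakdown_eq)
  then obtain b where "(\<zeta>,1) - a *\<^sub>R (\<xi>,1) = b *\<^sub>R (\<eta>,1::real)"
    by (auto simp: span_singleton)
  then have ab: "(\<zeta>,(1::real)) = a *\<^sub>R (\<xi>,1) + b *\<^sub>R (\<eta>,1)"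
    by (simp add: diff_eq_eq)
  have "0 = lform (\<zeta>,1) (\<zeta>,1)" using lform_null[OF assms(4)] by simp
  also have "\<dots> = 2*a*b*lform (\<xi>,1) (\<eta>,1)"
    unfolding ab lform_comb using lform_null[OF assms(1)] lform_null[OF assms(2)] by simp
  finally have "a = 0 \<or> b = 0" using lform_null_pair_neg[OF assms(1-3)] by simp
  moreover have "1 = a + b" "\<zeta> = a *\<^sub>R \<xi> + b *\<^sub>R \<eta>" using ab by auto
  ultimately show "\<zeta> = \<xi> \<or> \<zeta> = \<eta>" by auto
next
  obtain s where s: "s > 0" "(2 * s) *\<^sub>R (\<xi>,1) + s *\<^sub>R (\<eta>,1) \<in> geodesic \<xi> \<eta>"
    using geodesic_point_exists[OF assms(1-3), of 2] by auto
  obtain t where t: "t > 0" "(1 * t) *\<^sub>R (\<xi>,1) + t *\<^sub>R (\<eta>,1) \<in> geodesic \<xi> \<eta>"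
    using geodesic_point_exists[OF assms(1-3), of 1] by auto
  have "(\<xi>,1::real) = (1/s) *\<^sub>R ((2 * s) *\<^sub>R (\<xi>,1) + s *\<^sub>R (\<eta>,1))
                      - (1/t) *\<^sub>R ((1 * t) *\<^sub>R (\<xi>,1) + t *\<^sub>R (\<eta>,1))"
       "(\<eta>,1::real) = (2/t) *\<^sub>R ((1 * t) *\<^sub>R (\<xi>,1) + t *\<^sub>R (\<eta>,1))
                      - (1/s) *\<^sub>R ((2 * s) *\<^sub>R (\<xi>,1) + s *\<^sub>R (\<eta>,1))"
    using s t by (simp_all add: prod_eq_iff vec_eq_iff algebra_simps)
  then have "(\<xi>,1) \<in> span (geodesic \<xi> \<eta>)" "(\<eta>,1) \<in> span (geodesic \<xi> \<eta>)"
    by (metis span_diff span_mul span_base s(2) t(2))+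
  moreover assume "\<zeta> = \<xi> \<or> \<zeta> = \<eta>"
  ultimately show "(\<zeta>,1) \<in> span (geodesic \<xi> \<eta>)" by auto
qed

lemma geodesic_determines_endpoints:
  assumes "\<xi> \<in> bdry" "\<eta> \<in> bdry" "\<xi> \<noteq> \<eta>" "\<xi>' \<in> bdry" "\<eta>' \<in> bdry" "\<xi>' \<noteq> \<eta>'"
    and "geodesic \<xi> \<eta> = geodesic \<xi>' \<eta>'"
  shows "{\<xi>, \<eta>} = {\<xi>', \<eta>'}"
proof -
  have "{\<zeta>\<in>bdry. (\<zeta>,1) \<in> span (geodesic \<xi> \<eta>)} = {\<xi>,\<eta>}"
    using null_vector_in_geodesic_span[OF assms(1-3)] assms(1,2) by blast
  moreover have "{\<zeta>\<in>bdry. (\<zeta>,1) \<in> span (geodesic \<xi>' \<eta>')} = {\<xi>',\<eta>'}"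
    using null_vector_in_geodesic_span[OF assms(4-6)] assms(4,5) by blast
  ultimately show ?thesis using assms(7) by simp
qed

lemma hyperbolic_endpoints:
  assumes "hyperbolic g"
  obtains \<xi> \<eta> where "\<xi> \<in> bdry" "\<eta> \<in> bdry" "\<xi> \<noteq> \<eta>" "{\<zeta>. fixes_bdry g \<zeta>} = {\<xi>, \<eta>}"
proof -
  obtain \<xi> \<eta> where "\<xi> \<noteq> \<eta>" "{\<zeta>. fixes_bdry g \<zeta>} = {\<xi>, \<eta>}"
    using assms unfolding hyperbolic_def by blast
  moreover from this have "\<xi> \<in> bdry" "\<eta> \<in> bdry" by (auto simp: fixes_bdry_def)
  ultimately show thesis using that by blast
qed

subsection \<open>Isometries fixing both ends of an axis\<close>

text \<open>\<open>f\<close> scales the null vector of \<open>\<xi>\<close> by \<open>\<beta>\<close> and that of \<open>\<eta>\<close> by \<open>1/\<beta>\<close>; for an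
  isometry this means \<open>f\<close> translates along the axis from \<open>\<eta>\<close> to \<open>\<xi>\<close> by \<open>ln \<beta>\<close>.\<close>
definition scales_axis :: "('n::finite) lmap \<Rightarrow> real^'n \<Rightarrow> real^'n \<Rightarrow> real \<Rightarrow> bool" where
  "scales_axis f \<xi> \<eta> \<beta> \<longleftrightarrow> f (\<xi>,1) = \<beta> *\<^sub>R (\<xi>,1) \<and> f (\<eta>,1) = (1/\<beta>) *\<^sub>R (\<eta>,1)"

lemma axis_midpoint:
  assumes "\<xi> \<in> bdry" "\<eta> \<in> bdry" "\<xi> \<noteq> \<eta>"
  obtains t where "t > 0" "t *\<^sub>R (\<xi>,1) + t *\<^sub>R (\<eta>,1) \<in> hyp_space"
  using geodesic_point_exists[OF assms, of 1] by (auto simp: geodesic_def)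

text \<open>An isometry fixing two boundary points scales their null vectors by reciprocal
  positive factors: reciprocal because the pairing of \<open>u\<close> and \<open>v\<close> is preserved, positive
  because the upper sheet of the hyperboloid is preserved.\<close>
lemma isom_fixing_endpoints_scales_axis:
  assumes f: "f \<in> isom" and xe: "\<xi> \<in> bdry" "\<eta> \<in> bdry" "\<xi> \<noteq> \<eta>"
    and fx: "fixes_bdry f \<xi>" "fixes_bdry f \<eta>"
  shows "\<exists>\<beta>>0. scales_axis f \<xi> \<eta> \<beta>"
proof -
  obtain c where c: "f (\<xi>,1) = c *\<^sub>R (\<xi>,1)" using fx(1) unfolding fixes_bdry_def by blast
  obtain d where d: "f (\<eta>,1) = d *\<^sub>R (\<eta>,1)" using fx(2) unfolding fixes_bdry_def by blast
  have lin: "linear f" and hs: "f ` hyp_space = hyp_space"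
    using f by (auto simp: isom_def)
  have pres: "lform (f x) (f y) = lform x y" for x y
    using f unfolding isom_def by blast
  have "lform (f (\<xi>,1)) (f (\<eta>,1)) = d * (c * lform (\<xi>,1) (\<eta>,1))"
    by (simp only: c d lform_scale_left lform_scale_right)
  then have "(c * d - 1) * lform (\<xi>,1) (\<eta>,1) = 0"
    unfolding pres by (simp add: algebra_simps)
  then have cd: "c * d = 1" using lform_null_pair_neg[OF xe] by simp
  obtain t where t: "t > 0" and p: "t *\<^sub>R (\<xi>,1) + t *\<^sub>R (\<eta>,1) \<in> hyp_space"
    using axis_midpoint[OF xe] .
  have "f (t *\<^sub>R (\<xi>,1) + t *\<^sub>R (\<eta>,1)) = (t*c) *\<^sub>R (\<xi>,1) + (t*d) *\<^sub>R (\<eta>,1)"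
    by (simp only: linear_add[OF lin] linear_scale[OF lin] c d scaleR_scaleR)
  moreover have "f (t *\<^sub>R (\<xi>,1) + t *\<^sub>R (\<eta>,1)) \<in> hyp_space" using p hs by blast
  ultimately have "t * (c + d) > 0" by (simp add: hyp_space_def distrib_left)
  then have "c + d > 0" using t by (simp add: zero_less_mult_iff)
  moreover have "d = 1/c"
    using cd by (metis mult.commute nonzero_mult_div_cancel_left zero_neq_one mult_zero_left)
  ultimately have "c > 0" by (metis add_nonpos_nonpos divide_le_0_1_iff not_le)
  with \<open>d = 1/c\<close> show ?thesis using c d by (auto simp: scales_axis_def)
qed

text \<open>A hyperbolic isometry has no fixed point inside, so its translation length along its
  axis is nonzero: otherwise it would fix the midpoint of the axis.\<close>
lemma hyperbolic_scale_ne_one: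
  assumes h: "hyperbolic f" and xe: "\<xi> \<in> bdry" "\<eta> \<in> bdry" "\<xi> \<noteq> \<eta>"
    and sc: "scales_axis f \<xi> \<eta> \<beta>"
  shows "\<beta> \<noteq> 1"
proof
  assume "\<beta> = 1"
  then have u: "f (\<xi>,1) = (\<xi>,1)" and v: "f (\<eta>,1) = (\<eta>,1)"
    using sc by (auto simp: scales_axis_def)
  have lin: "linear f" using h by (simp add: hyperbolic_def isom_def)
  obtain t where "t > 0" and p: "t *\<^sub>R (\<xi>,1) + t *\<^sub>R (\<eta>,1) \<in> hyp_space"
    using axis_midpoint[OF xe] .
  have "f (t *\<^sub>R (\<xi>,1) + t *\<^sub>R (\<eta>,1)) = t *\<^sub>R (\<xi>,1) + t *\<^sub>R (\<eta>,1)"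
    by (simp only: linear_add[OF lin] linear_scale[OF lin] u v)
  then show False using h p unfolding hyperbolic_def by blast
qed

lemma linear_funpow:
  fixes f :: "'a::real_vector \<Rightarrow> 'a"
  assumes "linear f" shows "linear (f ^^ n)"
proof (induction n)
  case (Suc n)
  show ?case by (simp only: funpow.simps(2)) (rule linear_compose[OF Suc.IH assms])
qed (simp add: linear_ident)

lemma eigenvector_funpow:
  assumes "linear f" "f x = c *\<^sub>R x"
  shows "(f ^^ n) x = (c ^ n) *\<^sub>R x"
proof (induction n)
  case (Suc n)
  have "(f ^^ Suc n) x = (c ^ n) *\<^sub>R f x" using Suc by (simp add: linear_scale[OF assms(1)])
  then show ?case using assms(2) by (simp add: mult.commute)
qed simp

lemma eigenvector_inv:
  assumes "linear (inv f)" "bij f" "f x = c *\<^sub>R x" "c \<noteq> 0"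
  shows "inv f x = (1/c) *\<^sub>R x"
proof -
  have "x = inv f (c *\<^sub>R x)" using assms(2,3) by (metis bij_is_inj inv_f_f)
  also have "\<dots> = c *\<^sub>R inv f x" by (rule linear_scale[OF assms(1)])
  finally have "(1/c) *\<^sub>R x = (1/c) *\<^sub>R (c *\<^sub>R inv f x)" by simp
  then show ?thesis using assms(4) by simp
qed

lemma scales_axis_power_product:
  assumes "linear f" "linear g" "scales_axis f \<xi> \<eta> \<alpha>" "scales_axis g \<xi> \<eta> \<beta>"
  shows "scales_axis (f ^^ a \<circ> g ^^ k) \<xi> \<eta> (\<alpha> ^ a * \<beta> ^ k)"
proof -
  have lin: "linear (f ^^ a)" by (rule linear_funpow[OF assms(1)])
  have prod: "(f ^^ a \<circ> g ^^ k) x = (\<gamma> ^ a * \<delta> ^ k) *\<^sub>R x"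
    if "f x = \<gamma> *\<^sub>R x" "g x = \<delta> *\<^sub>R x" for x \<gamma> \<delta>
    using eigenvector_funpow[OF assms(1) that(1)] eigenvector_funpow[OF assms(2) that(2)]
    by (simp add: linear_scale[OF lin] mult.commute)
  show ?thesis
    using assms(3,4) prod[of "(\<xi>,1)" \<alpha> \<beta>] prod[of "(\<eta>,1)" "1/\<alpha>" "1/\<beta>"]
    by (simp add: scales_axis_def power_one_over del: scaleR_Pair)
qed

lemma scales_axis_inv:
  assumes "linear (inv f)" "bij f" "scales_axis f \<xi> \<eta> \<beta>" "\<beta> \<noteq> 0"
  shows "scales_axis (inv f) \<xi> \<eta> (1/\<beta>)"
proof -
  have "inv f (\<eta>,1) = (1 / (1/\<beta>)) *\<^sub>R (\<eta>,1)"
    using assms by (intro eigenvector_inv) (simp_all add: scales_axis_def del: scaleR_Pair)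
  moreover have "inv f (\<xi>,1) = (1/\<beta>) *\<^sub>R (\<xi>,1)"
    using assms by (intro eigenvector_inv) (simp_all add: scales_axis_def del: scaleR_Pair)
  ultimately show ?thesis by (simp add: scales_axis_def del: scaleR_Pair)
qed

subsection \<open>Isometries translating boundedly along an axis have bounded norm\<close>

text \<open>Throughout, \<open>\<bar>lform (\<xi>,1) (\<eta>,1)\<bar>\<close> measures how far apart the two endpoints are.\<close>
lemma lform_positive_off_axis:
  assumes xe: "\<xi> \<in> bdry" "\<eta> \<in> bdry" "\<xi> \<noteq> \<eta>"
    and zu: "lform z (\<xi>,1) = 0" and zv: "lform z (\<eta>,1) = 0"
  shows "\<bar>lform (\<xi>,1) (\<eta>,1)\<bar> * norm z ^ 2 \<le> 4 * lform z z"
proof -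
  obtain a b where z: "z = (a, b)" by (cases z)
  define l where "l = \<bar>lform (\<xi>,1) (\<eta>,1)\<bar>"
  have l: "l = 1 - \<xi> \<bullet> \<eta>" "l > 0"
    using lform_null_pair_neg[OF xe] by (auto simp: l_def lform_def)
  define m where "m = (1/2) *\<^sub>R (\<xi> + \<eta>)"
  have "a \<bullet> \<xi> = b" "a \<bullet> \<eta> = b" using zu zv by (simp_all add: z lform_def)
  then have bm: "b = a \<bullet> m" by (simp add: m_def inner_add_right)
  have "4 * (m \<bullet> m) = \<xi> \<bullet> \<xi> + 2 * (\<xi> \<bullet> \<eta>) + \<eta> \<bullet> \<eta>"
    by (simp add: m_def inner_add_left inner_add_right inner_commute)
  then have mm: "m \<bullet> m = 1 - l/2" using xe(1,2) l(1) by (simp add: bdry_inner_self field_simps)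
  define A where "A = a \<bullet> a"
  define B where "B = b ^ 2"
  have A: "A \<ge> 0" by (simp add: A_def)
  have "B \<le> A * (1 - l/2)"
    using Cauchy_Schwarz_ineq[of a m] by (simp add: A_def B_def bm mm)
  then have "(4 + l) * B \<le> (4 + l) * (A * (1 - l/2))"
    using l(2) by (intro mult_left_mono) auto
  also have "\<dots> = A * (4 - l) - A * l * l / 2" by (simp add: algebra_simps)
  also have "\<dots> \<le> A * (4 - l)" using A l(2) by simp
  finally have "l * (A + B) \<le> 4 * (A - B)" by (simp add: algebra_simps)
  moreover have "lform z z = A - B" "norm z ^ 2 = A + B"
    by (simp_all add: z lform_def A_def B_def norm_Pair dot_square_norm power2_eq_square)
  ultimately show ?thesis by (simp add: l_def)
qed

lemma axis_decomposition:
  assumes xe: "\<xi> \<in> bdry" "\<eta> \<in> bdry" "\<xi> \<noteq> \<eta>"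
  defines "l \<equiv> \<bar>lform (\<xi>,1) (\<eta>,1)\<bar>"
  obtains p q w where "x = p *\<^sub>R (\<xi>,1) + q *\<^sub>R (\<eta>,1) + w"
    "lform w (\<xi>,1) = 0" "lform w (\<eta>,1) = 0"
    "\<bar>p\<bar> * sqrt 2 \<le> 2 * norm x / l" "\<bar>q\<bar> * sqrt 2 \<le> 2 * norm x / l"
    "norm w \<le> norm x * (1 + 4 / l)"
proof -
  define u :: "'a lvec" where "u = (\<xi>,1)"
  define v :: "'a lvec" where "v = (\<eta>,1)"
  define L where "L = lform u v"
  have L: "L < 0" "l = - L"
    using lform_null_pair_neg[OF xe] by (auto simp: L_def l_def u_def v_def)
  have Luv: "lform v u = L" by (simp add: L_def lform_sym)
  have uu: "lform u u = 0" "lform v v = 0" using lform_null xe by (auto simp: u_def v_def)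
  have nu: "norm u = sqrt 2" "norm v = sqrt 2"
    using norm_null_vector xe by (auto simp: u_def v_def)
  have coeff_bound: "\<bar>lform x y / L\<bar> * sqrt 2 \<le> 2 * norm x / l" if "norm y = sqrt 2" for y
  proof -
    have "\<bar>lform x y\<bar> * sqrt 2 \<le> norm x * sqrt 2 * sqrt 2"
      using lform_abs_le[of x y] that by (simp add: mult_right_mono)
    then show ?thesis using L by (simp add: abs_divide field_simps)
  qed
  define p where "p = lform x v / L"
  define q where "q = lform x u / L"
  define w where "w = x - p *\<^sub>R u - q *\<^sub>R v"
  have "lform w u = 0" "lform w v = 0"
    using L by (simp_all add: w_def p_def q_def lform_diff_left lform_scale_left L_def Luv uu)
  moreover have "\<bar>p\<bar> * sqrt 2 \<le> 2 * norm x / l" "\<bar>q\<bar> * sqrt 2 \<le> 2 * norm x / l"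
    using coeff_bound nu by (simp_all add: p_def q_def)
  moreover have "norm w \<le> norm x * (1 + 4 / l)"
  proof -
    have "norm w \<le> norm x + norm (p *\<^sub>R u) + norm (q *\<^sub>R v)" unfolding w_def
      using norm_triangle_ineq4[of "x - p *\<^sub>R u" "q *\<^sub>R v"] norm_triangle_ineq4[of x "p *\<^sub>R u"]
      by linarith
    also have "\<dots> = norm x + \<bar>p\<bar> * sqrt 2 + \<bar>q\<bar> * sqrt 2" using nu by simp
    also have "\<dots> \<le> norm x + 2 * norm x / l + 2 * norm x / l"
      using calculation \<open>\<bar>p\<bar> * sqrt 2 \<le> _\<close> \<open>\<bar>q\<bar> * sqrt 2 \<le> _\<close> by linarith
    finally show ?thesis by (simp add: algebra_simps)
  qed
  moreover have "x = p *\<^sub>R u + q *\<^sub>R v + w" by (simp add: w_def)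
  ultimately show thesis using that by (simp add: u_def v_def)
qed

lemma scales_axis_norm_bound:
  assumes xe: "\<xi> \<in> bdry" "\<eta> \<in> bdry" "\<xi> \<noteq> \<eta>"
    and lin: "linear f" and pres: "\<And>x y. lform (f x) (f y) = lform x y"
    and \<beta>: "\<beta> > 0" "scales_axis f \<xi> \<eta> \<beta>"
  defines "l \<equiv> \<bar>lform (\<xi>,1) (\<eta>,1)\<bar>"
  shows "norm (f x) \<le> ((\<beta> + 1/\<beta>) * (2 / l) + sqrt (4 / l) * (1 + 4 / l)) * norm x"
proof -
  have l: "l > 0" using lform_null_pair_neg[OF xe] by (simp add: l_def)
  obtain p q w where x: "x = p *\<^sub>R (\<xi>,1) + q *\<^sub>R (\<eta>,1) + w"
    and wu: "lform w (\<xi>,1) = 0" and wv: "lform w (\<eta>,1) = 0"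
    and pb: "\<bar>p\<bar> * sqrt 2 \<le> 2 * norm x / l" and qb: "\<bar>q\<bar> * sqrt 2 \<le> 2 * norm x / l"
    and wb: "norm w \<le> norm x * (1 + 4 / l)"
    using axis_decomposition[OF xe] unfolding l_def by blast
  have fu: "f (\<xi>,1) = \<beta> *\<^sub>R (\<xi>,1)" and fv: "f (\<eta>,1) = (1/\<beta>) *\<^sub>R (\<eta>,1)"
    using \<beta>(2) by (simp_all add: scales_axis_def del: scaleR_Pair)
  have fx: "f x = (p * \<beta>) *\<^sub>R (\<xi>,1) + (q / \<beta>) *\<^sub>R (\<eta>,1) + f w"
    by (subst x) (simp add: linear_add[OF lin] linear_scale[OF lin] fu fv del: scaleR_Pair)
  text \<open>The image of the orthogonal part stays orthogonal to the axis.\<close>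
  have "\<beta> * lform (f w) (\<xi>,1) = 0" "(1/\<beta>) * lform (f w) (\<eta>,1) = 0"
    using pres[of w "(\<xi>,1)"] pres[of w "(\<eta>,1)"] wu wv
    by (simp_all add: fu fv lform_scale_right del: scaleR_Pair)
  then have "l * norm (f w) ^ 2 \<le> 4 * lform (f w) (f w)"
    using lform_positive_off_axis[OF xe] \<beta>(1) by (simp add: l_def)
  also have "\<dots> \<le> 4 * norm w ^ 2" using lform_self_le[of w] by (simp add: pres)
  finally have "norm (f w) ^ 2 \<le> (4 / l) * norm w ^ 2" using l by (simp add: field_simps)
  then have "norm (f w) \<le> sqrt (4 / l) * norm w"
    by (metis real_sqrt_le_mono real_sqrt_mult real_sqrt_pow2_iff real_sqrt_abs norm_ge_zero
        abs_norm_cancel power2_abs)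
  also have "\<dots> \<le> sqrt (4 / l) * (norm x * (1 + 4 / l))" using wb l by (intro mult_left_mono) auto
  finally have fwb: "norm (f w) \<le> sqrt (4 / l) * (1 + 4 / l) * norm x" by (simp add: ac_simps)
  have "norm ((p * \<beta>) *\<^sub>R (\<xi>,1::real)) = \<beta> * (\<bar>p\<bar> * sqrt 2)"
       "norm ((q / \<beta>) *\<^sub>R (\<eta>,1::real)) = (1/\<beta>) * (\<bar>q\<bar> * sqrt 2)"
    using \<beta>(1) by (simp_all only: norm_scaleR norm_null_vector xe abs_mult abs_divide)
      (simp_all add: field_simps)
  then have "norm (f x) \<le> \<beta> * (\<bar>p\<bar> * sqrt 2) + (1/\<beta>) * (\<bar>q\<bar> * sqrt 2) + norm (f w)"
    unfolding fx
    using norm_triangle_ineq[of "(p * \<beta>) *\<^sub>R (\<xi>,1::real) + (q / \<beta>) *\<^sub>R (\<eta>,1)" "f w"]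
      norm_triangle_ineq[of "(p * \<beta>) *\<^sub>R (\<xi>,1::real)" "(q / \<beta>) *\<^sub>R (\<eta>,1)"]
    by linarith
  also have "\<dots> \<le> \<beta> * (2 * norm x / l) + (1/\<beta>) * (2 * norm x / l) + norm (f w)"
    using pb qb \<beta>(1) by (intro add_mono mult_left_mono) auto
  also have "\<dots> = (\<beta> + 1/\<beta>) * (2 / l) * norm x + norm (f w)"
    using \<beta>(1) l by (simp add: field_simps)
  also have "\<dots> \<le> ((\<beta> + 1/\<beta>) * (2 / l) + sqrt (4 / l) * (1 + 4 / l)) * norm x"
    using fwb by (simp add: distrib_right)
  finally show ?thesis .
qed

lemma sum_recip_le:
  assumes "(D::real) \<ge> 1" "1/D \<le> b" "b \<le> D"
  shows "b + 1/b \<le> D + 1/D"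
proof -
  have D0: "D > 0" using assms by simp
  have b0: "b > 0" using assms D0 by (meson divide_pos_pos less_le_trans zero_less_one)
  have "(b - D) * (b - 1/D) \<le> 0" using assms by (intro mult_nonpos_nonneg) auto
  moreover have "(b - D) * (b - 1/D) = b*b + 1 - (D + 1/D) * b" using D0 by (simp add: field_simps)
  ultimately have "b*b + 1 \<le> (D + 1/D) * b" by linarith
  then show ?thesis using b0 by (simp add: field_simps)
qed

text \<open>A uniform bound for all isometries translating along the axis by at most \<open>ln D\<close>.\<close>
definition axis_norm_bound :: "real^'n::finite \<Rightarrow> real^'n \<Rightarrow> real \<Rightarrow> real" where
  "axis_norm_bound \<xi> \<eta> D =
     (let l = \<bar>lform (\<xi>,1) (\<eta>,1)\<bar> in (D + 1/D) * (2 / l) + sqrt (4 / l) * (1 + 4 / l))"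

lemma isom_onorm_le_axis_norm_bound:
  assumes xe: "\<xi> \<in> bdry" "\<eta> \<in> bdry" "\<xi> \<noteq> \<eta>"
    and f: "f \<in> isom" and sc: "scales_axis f \<xi> \<eta> \<beta>"
    and D: "D \<ge> 1" "1/D \<le> \<beta>" "\<beta> \<le> D"
  shows "onorm f \<le> axis_norm_bound \<xi> \<eta> D"
proof (rule onorm_le)
  fix x
  define l where "l = \<bar>lform (\<xi>,1) (\<eta>,1)\<bar>"
  have l: "l > 0" using lform_null_pair_neg[OF xe] by (simp add: l_def)
  have "1/D > 0" using D(1) by simp
  then have \<beta>: "\<beta> > 0" using D(2) by linarith
  have lin: "linear f" and pres: "\<And>x y. lform (f x) (f y) = lform x y"
    using f unfolding isom_def by blast+
  have "norm (f x) \<le> ((\<beta> + 1/\<beta>) * (2 / l) + sqrt (4 / l) * (1 + 4 / l)) * norm x"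
    using scales_axis_norm_bound[OF xe lin pres \<beta> sc] by (simp add: l_def)
  also have "\<dots> \<le> ((D + 1/D) * (2 / l) + sqrt (4 / l) * (1 + 4 / l)) * norm x"
    using sum_recip_le[OF D] l by (intro mult_right_mono add_right_mono) auto
  finally show "norm (f x) \<le> axis_norm_bound \<xi> \<eta> D * norm x"
    by (simp add: axis_norm_bound_def l_def Let_def)
qed

subsection \<open>Bounded families in a discrete group are finite\<close>

lemma isom_bounded_linear: "f \<in> isom \<Longrightarrow> bounded_linear f"
  by (simp add: isom_def linear_conv_bounded_linear)

lemma discrete_group_separated:
  assumes grp: "isom_subgroup G" and disc: "discrete_group G"
  obtains \<epsilon> where "\<epsilon> > 0"
    "\<And>f g. f \<in> G \<Longrightarrow> g \<in> G \<Longrightarrow> onorm (\<lambda>v. f v - g v) * onorm (inv g) < \<epsilon> \<Longrightarrow> f = g"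
proof -
  have iso: "\<And>f. f \<in> G \<Longrightarrow> f \<in> isom" and inv: "\<And>f. f \<in> G \<Longrightarrow> inv f \<in> G"
    and comp: "\<And>f g. f \<in> G \<Longrightarrow> g \<in> G \<Longrightarrow> f \<circ> g \<in> G" and "id \<in> G"
    using grp by (auto simp: isom_subgroup_def)
  obtain \<epsilon> where \<epsilon>: "\<epsilon> > 0" "\<And>k. k \<in> G \<Longrightarrow> onorm (\<lambda>v. k v - id v) < \<epsilon> \<Longrightarrow> k = id"
    using disc \<open>id \<in> G\<close> unfolding discrete_group_def by blast
  have "f = g" if fg: "f \<in> G" "g \<in> G" and close: "onorm (\<lambda>v. f v - g v) * onorm (inv g) < \<epsilon>"
    for f g
  proof -
    have bij: "bij g" using iso[OF fg(2)] by (simp add: isom_def)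
    have "(\<lambda>v. (f \<circ> inv g) v - id v) = (\<lambda>v. f v - g v) \<circ> inv g"
    proof
      fix v
      have "g (inv g v) = v" using bij by (simp add: bij_is_surj surj_f_inv_f)
      then show "(f \<circ> inv g) v - id v = ((\<lambda>v. f v - g v) \<circ> inv g) v" by simp
    qed
    then have "onorm (\<lambda>v. (f \<circ> inv g) v - id v) \<le> onorm (\<lambda>v. f v - g v) * onorm (inv g)"
      using onorm_compose[of "\<lambda>v. f v - g v" "inv g"] fg
      by (simp add: bounded_linear_sub isom_bounded_linear iso inv)
    then have "f \<circ> inv g = id" using \<epsilon>(2)[OF comp[OF fg(1) inv[OF fg(2)]]] close by linarith
    then have "f \<circ> (inv g \<circ> g) = g" by (simp add: o_assoc)
    then show "f = g" using bij by (simp add: bij_is_inj inv_o_cancel)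
  qed
  with \<epsilon>(1) show thesis using that by blast
qed

text \<open>A sequence in a discrete group whose elements and inverses have uniformly bounded
  operator norm takes some value twice (compactness of bounded sets of linear maps).\<close>
lemma bounded_sequence_in_discrete_group_repeats:
  fixes F :: "nat \<Rightarrow> ('n::finite) lmap"
  assumes grp: "isom_subgroup G" and disc: "discrete_group G"
    and FG: "\<And>a. F a \<in> G" and B: "\<And>a. onorm (F a) \<le> B" "\<And>a. onorm (inv (F a)) \<le> B"
  shows "\<exists>a b. a < b \<and> F a = F b"
proof -
  obtain \<epsilon> where \<epsilon>: "\<epsilon> > 0"
    "\<And>f g. f \<in> G \<Longrightarrow> g \<in> G \<Longrightarrow> onorm (\<lambda>v. f v - g v) * onorm (inv g) < \<epsilon> \<Longrightarrow> f = g"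
    using discrete_group_separated[OF grp disc] by blast
  have bl: "bounded_linear (F a)" and bl_inv: "bounded_linear (inv (F a))" for a
    using FG grp by (auto simp: isom_subgroup_def intro!: isom_bounded_linear)
  have B0: "B \<ge> 0" using B(1)[of 0] onorm_pos_le[OF bl[of 0]] by linarith
  define S where "S a = Blinfun (F a)" for a
  have S: "blinfun_apply (S a) = F a" for a
    unfolding S_def by (rule bounded_linear_Blinfun_apply[OF bl])
  have "bounded (range S)"
    unfolding bounded_iff using B(1) by (auto simp: norm_blinfun.rep_eq S)
  then obtain r l where r: "strict_mono r" "(S \<circ> r) \<longlonglongrightarrow> l"
    using bounded_imp_convergent_subsequence by blast
  have \<delta>: "\<epsilon> / (B + 1) > 0" using \<epsilon>(1) B0 by simp
  then obtain M where M: "\<And>m n. m \<ge> M \<Longrightarrow> n \<ge> M \<Longrightarrow> norm ((S \<circ> r) m - (S \<circ> r) n) < \<epsilon> / (B + 1)"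
    using CauchyD[OF LIMSEQ_imp_Cauchy[OF r(2)]] by blast
  define a b where "a = r M" and "b = r (Suc M)"
  have "onorm (\<lambda>v. F a v - F b v) = norm (S a - S b)"
    by (simp add: norm_blinfun.rep_eq S minus_blinfun.rep_eq)
  also have "\<dots> < \<epsilon> / (B + 1)" using M[of M "Suc M"] by (simp add: a_def b_def)
  finally have "onorm (\<lambda>v. F a v - F b v) * onorm (inv (F b)) \<le> \<epsilon> / (B + 1) * B"
    using B(2)[of b] onorm_pos_le[OF bl_inv] \<delta> by (intro mult_mono) auto
  also have "\<dots> < \<epsilon>" using \<epsilon>(1) B0 by (simp add: field_simps)
  finally have "F a = F b" using \<epsilon>(2)[OF FG FG] by blast
  moreover have "a < b" using r(1) by (simp add: a_def b_def strict_mono_def)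
  ultimately show ?thesis by blast
qed

subsection \<open>Balancing two translations in opposite directions\<close>

text \<open>If \<open>ln c\<close> and \<open>ln d\<close> have opposite signs, then for every \<open>a\<close> a suitable number \<open>k\<close>
  of steps of length \<open>\<bar>ln d\<bar>\<close> brings \<open>a ln c + k ln d\<close> back into \<open>[-\<bar>ln d\<bar>, \<bar>ln d\<bar>]\<close>.\<close>
lemma balancing_exponent:
  fixes c d :: real
  assumes "c > 0" "d > 0" "ln c * ln d \<le> 0" "ln d \<noteq> 0"
  shows "\<exists>k::nat. exp (- \<bar>ln d\<bar>) \<le> c ^ a * d ^ k \<and> c ^ a * d ^ k \<le> exp \<bar>ln d\<bar>"
proof -
  define X where "X = real a * \<bar>ln c\<bar>"
  define Y where "Y = \<bar>ln d\<bar>"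
  have Y: "Y > 0" using assms(4) by (simp add: Y_def)
  define k where "k = nat \<lfloor>X / Y\<rfloor>"
  have "real k = of_int \<lfloor>X / Y\<rfloor>" using Y by (simp add: k_def X_def)
  then have "real k \<le> X / Y" "X / Y < real k + 1" by linarith+
  then have k: "real k * Y \<le> X" "X < real k * Y + Y"
    using Y by (simp_all add: pos_le_divide_eq pos_divide_less_eq algebra_simps)
  define e where "e = real a * ln c + real k * ln d"
  have "e = X - real k * Y \<or> e = - (X - real k * Y)"
  proof (cases "ln d < 0")
    case True
    then have "ln c \<ge> 0" using assms(3) by (simp add: mult_le_0_iff)
    then show ?thesis using True by (simp add: e_def X_def Y_def)
  next
    case False
    then have "ln d > 0" using assms(4) by simp
    then have "ln c \<le> 0" using assms(3) by (simp add: mult_le_0_iff)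
    then show ?thesis using \<open>ln d > 0\<close> by (simp add: e_def X_def Y_def)
  qed
  then have "\<bar>e\<bar> \<le> Y" using k by auto
  moreover have "c ^ a * d ^ k = exp e"
    using assms(1,2) by (simp add: e_def exp_add exp_of_nat_mult)
  ultimately show ?thesis unfolding Y_def by (intro exI[of _ k]) (auto simp: abs_le_iff)
qed

subsection \<open>From a common axis to a common power\<close>

lemma funpow_in_subgroup: "isom_subgroup K \<Longrightarrow> f \<in> K \<Longrightarrow> f ^^ n \<in> K"
  by (induction n) (auto simp: isom_subgroup_def)

lemma power_difference_in_subgroup:
  assumes H: "isom_subgroup H" "p \<in> H" "q \<in> H" and g: "inj g"
    and ab: "a < b" and eq: "g ^^ a \<circ> p = g ^^ b \<circ> q"
  shows "g ^^ (b - a) \<in> H"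
proof -
  have "g ^^ b = g ^^ a \<circ> g ^^ (b - a)" using ab by (simp add: funpow_add[symmetric])
  then have "g ^^ a \<circ> p = g ^^ a \<circ> (g ^^ (b - a) \<circ> q)" using eq by (simp add: o_assoc)
  then have "p = g ^^ (b - a) \<circ> q"
    using inj_fn[OF g, of a] by (auto simp: fun_eq_iff dest: injD)
  moreover have "q \<circ> inv q = id"
    using H by (auto simp: isom_subgroup_def isom_def bij_is_surj surj_iff[symmetric])
  ultimately have "g ^^ (b - a) = p \<circ> inv q" by (simp add: comp_assoc)
  then show ?thesis using H by (simp add: isom_subgroup_def)
qed

text \<open>The heart of the argument: if \<open>g \<in> G\<close> and \<open>h \<in> H\<close> translate along the same axis
  in opposite directions, the elements \<open>g^a h^(k a)\<close> with balanced translation length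
  form a bounded family in the discrete group \<open>G\<close>, so two of them coincide.\<close>
lemma common_axis_power_in_subgroup:
  assumes grp: "isom_subgroup G" and disc: "discrete_group G"
    and H: "isom_subgroup H" "H \<subseteq> G" and xe: "\<xi> \<in> bdry" "\<eta> \<in> bdry" "\<xi> \<noteq> \<eta>"
    and g: "g \<in> G" "scales_axis g \<xi> \<eta> c" "c > 0"
    and h: "h \<in> H" "scales_axis h \<xi> \<eta> d" "d > 0"
    and opposite: "ln c * ln d \<le> 0" "ln d \<noteq> 0"
  shows "\<exists>m>0. g ^^ m \<in> H"
proof -
  have iso: "f \<in> G \<Longrightarrow> f \<in> isom" and inv_G: "f \<in> G \<Longrightarrow> inv f \<in> G" for f
    using grp by (auto simp: isom_subgroup_def)
  have lin: "f \<in> G \<Longrightarrow> linear f" and bij: "f \<in> G \<Longrightarrow> bij f" for f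
    using iso by (auto simp: isom_def)
  have hG: "h \<in> G" using h(1) H(2) by blast
  define D where "D = exp \<bar>ln d\<bar>"
  have D: "D \<ge> 1" "exp (- \<bar>ln d\<bar>) = 1/D" by (simp_all add: D_def exp_minus field_simps)
  have "\<forall>a. \<exists>k. 1/D \<le> c ^ a * d ^ k \<and> c ^ a * d ^ k \<le> D"
    using balancing_exponent[OF g(3) h(3) opposite] D(2) by (simp add: D_def)
  then obtain k where k: "\<And>a. 1/D \<le> c ^ a * d ^ k a \<and> c ^ a * d ^ k a \<le> D" by metis
  define F where "F a = g ^^ a \<circ> h ^^ k a" for a
  have FG: "F a \<in> G" for a
    unfolding F_def using grp g(1) hG by (simp add: funpow_in_subgroup isom_subgroup_def)
  have F: "scales_axis (F a) \<xi> \<eta> (c ^ a * d ^ k a)" for a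
    unfolding F_def by (rule scales_axis_power_product[OF lin[OF g(1)] lin[OF hG] g(2) h(2)])
  have "onorm (F a) \<le> axis_norm_bound \<xi> \<eta> D" for a
    using isom_onorm_le_axis_norm_bound[OF xe iso[OF FG] F D(1)] k by blast
  moreover have "onorm (inv (F a)) \<le> axis_norm_bound \<xi> \<eta> D" for a
  proof -
    have pos: "c ^ a * d ^ k a > 0" using g(3) h(3) by simp
    then have "c ^ a * d ^ k a \<noteq> 0" by linarith
    then have "scales_axis (inv (F a)) \<xi> \<eta> (1 / (c ^ a * d ^ k a))"
      by (rule scales_axis_inv[OF lin[OF inv_G[OF FG]] bij[OF FG] F])
    moreover have "1/D \<le> 1 / (c ^ a * d ^ k a)" "1 / (c ^ a * d ^ k a) \<le> D"
      using k[of a] pos D(1) by (auto simp: field_simps)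
    ultimately show ?thesis
      using isom_onorm_le_axis_norm_bound[OF xe iso[OF inv_G[OF FG]] _ D(1)] by blast
  qed
  ultimately obtain a b where "a < b" "F a = F b"
    using bounded_sequence_in_discrete_group_repeats[OF grp disc FG] by blast
  then have "g ^^ (b - a) \<in> H"
    using power_difference_in_subgroup[OF H(1) funpow_in_subgroup funpow_in_subgroup]
      h(1) H(1) bij[OF g(1)] by (simp add: F_def bij_is_inj)
  then show ?thesis using \<open>a < b\<close> by (intro exI[of _ "b - a"]) simp
qed

lemma hyperbolic_in_subgroup_with_same_endpoints:
  assumes "Ax G = Ax H" and g: "g \<in> G" "hyperbolic g"
    and xe: "\<xi> \<in> bdry" "\<eta> \<in> bdry" "\<xi> \<noteq> \<eta>" "{\<zeta>. fixes_bdry g \<zeta>} = {\<xi>, \<eta>}"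
  obtains h where "h \<in> H" "hyperbolic h" "fixes_bdry h \<xi>" "fixes_bdry h \<eta>"
proof -
  have "geodesic \<xi> \<eta> \<in> Ax H" using assms unfolding Ax_def by blast
  then obtain \<xi>' \<eta>' h where geq: "geodesic \<xi> \<eta> = geodesic \<xi>' \<eta>'" and h: "h \<in> H"
    "hyperbolic h" and fix_h: "{\<zeta>. fixes_bdry h \<zeta>} = {\<xi>', \<eta>'}"
    unfolding Ax_def by blast
  obtain \<xi>'' \<eta>'' where "\<xi>'' \<in> bdry" "\<eta>'' \<in> bdry" "\<xi>'' \<noteq> \<eta>''"
    "{\<zeta>. fixes_bdry h \<zeta>} = {\<xi>'', \<eta>''}"
    using hyperbolic_endpoints[OF h(2)] .
  then have "\<xi>' \<in> bdry" "\<eta>' \<in> bdry" "\<xi>' \<noteq> \<eta>'" using fix_h by (metis doubleton_eq_iff)+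
  then have "{\<xi>, \<eta>} = {\<xi>', \<eta>'}" using geodesic_determines_endpoints[OF xe(1-3)] geq by blast
  then have "fixes_bdry h \<xi>" "fixes_bdry h \<eta>" using fix_h by blast+
  then show thesis using that[OF h] by blast
qed

text \<open>Replacing \<open>h\<close> by its inverse if necessary, \<open>H\<close> contains an element translating along
  the axis by a nonzero amount in the direction opposite to a given translation \<open>c\<close>.\<close>
lemma opposite_translation_in_subgroup:
  assumes H: "isom_subgroup H" and h: "h \<in> H" "hyperbolic h"
    and xe: "\<xi> \<in> bdry" "\<eta> \<in> bdry" "\<xi> \<noteq> \<eta>" and fix_h: "fixes_bdry h \<xi>" "fixes_bdry h \<eta>"
  obtains h' d where "h' \<in> H" "d > 0" "scales_axis h' \<xi> \<eta> d" "ln c * ln d \<le> 0" "ln d \<noteq> 0"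
proof -
  have iso: "f \<in> H \<Longrightarrow> f \<in> isom" for f using H by (auto simp: isom_subgroup_def)
  obtain d where d: "d > 0" "scales_axis h \<xi> \<eta> d"
    using isom_fixing_endpoints_scales_axis[OF iso[OF h(1)] xe fix_h] by blast
  have "ln d \<noteq> 0" using hyperbolic_scale_ne_one[OF h(2) xe d(2)] d(1) by simp
  show thesis
  proof (cases "ln c * ln d \<le> 0")
    case True
    then show thesis using that[OF h(1) d] \<open>ln d \<noteq> 0\<close> by blast
  next
    case False
    have "inv h \<in> H" using H h(1) by (simp add: isom_subgroup_def)
    then have "scales_axis (inv h) \<xi> \<eta> (1/d)"
      using iso[OF h(1)] iso d by (intro scales_axis_inv) (auto simp: isom_def)
    moreover have "ln c * ln (1/d) \<le> 0" "ln (1/d) \<noteq> 0"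
      using False d(1) \<open>ln d \<noteq> 0\<close> by (simp_all add: ln_div)
    moreover have "1/d > 0" using d(1) by simp
    ultimately show thesis using that[OF \<open>inv h \<in> H\<close>] by blast
  qed
qed

theorem lemma2p9:
  fixes G H :: "('n::finite) lmap set"
  assumes "kleinian G" and "non_elementary G" and "fin_generated G" and "torsion_free G"
    and "isom_subgroup H" and "H \<subseteq> G" and "Ax G = Ax H"
  shows "\<forall>g\<in>G. hyperbolic g \<longrightarrow> (\<exists>m::nat. m > 0 \<and> g ^^ m \<in> H)"
proof (intro ballI impI)
  fix g assume g: "g \<in> G" "hyperbolic g"
  have grp: "isom_subgroup G" and disc: "discrete_group G"
    using assms(1) by (auto simp: kleinian_def)
  obtain \<xi> \<eta> where xe: "\<xi> \<in> bdry" "\<eta> \<in> bdry" "\<xi> \<noteq> \<eta>"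
    and fix_g: "{\<zeta>. fixes_bdry g \<zeta>} = {\<xi>, \<eta>}"
    using hyperbolic_endpoints[OF g(2)] .
  obtain c where c: "c > 0" "scales_axis g \<xi> \<eta> c"
    using isom_fixing_endpoints_scales_axis[of g \<xi> \<eta>] g(2) xe fix_g
    by (auto simp: hyperbolic_def)
  obtain h where h: "h \<in> H" "hyperbolic h" "fixes_bdry h \<xi>" "fixes_bdry h \<eta>"
    using hyperbolic_in_subgroup_with_same_endpoints[OF assms(7) g xe fix_g] .
  obtain h' d where "h' \<in> H" "d > 0" "scales_axis h' \<xi> \<eta> d" "ln c * ln d \<le> 0" "ln d \<noteq> 0"
    using opposite_translation_in_subgroup[OF assms(5) h(1,2) xe h(3,4)] .
  then show "\<exists>m::nat. m > 0 \<and> g ^^ m \<in> H"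
    using common_axis_power_in_subgroup[OF grp disc assms(5,6) xe g(1) c(2,1)] by blast
qed

end
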